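(* Suppose $N_1\gtrsim1$, $1\lesssim A\ll N_1$ and $k\ll N_1^2$. Decompose $[\frac14N_1,4N_1]$ into a sequence of consecutive intervals $\{I_j\}$, each of length $A^{-1}$. Then there is a mapping $j\mapsto\kappa(j)$ such that for all $x,y\ge0$ with $k\le x^2-y^2\le k+N_1A^{-1}$ and $\frac14N_1\le x,y\le4N_1$, the inclusion $y\in I_j$ implies $x\in I_{\kappa(j)-100}\cup\dots\cup I_{\kappa(j)+100}$. Moreover, as $j$ ranges over all indices, $\kappa(j)$ takes any particular value no more than $100$ times.
   Context: $A\lesssim B$ means $A\le cB$ for an absolute constant $c$; $A\ll B$ means $A\le cB$ for a sufficiently small absolute constant $c$; $N_1,A,k$ are real parameters (with $k$ a real number, not necessarily positive). *)

theory Defs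
  imports Complex_Main
begin

text \<open>The j-th interval of the decomposition starting at offset a, of length 1/A
  (half-open, so that consecutive intervals are disjoint and tile the line).\<close>
definition Ival :: "real \<Rightarrow> real \<Rightarrow> int \<Rightarrow> real set" where
  "Ival a A j = {a + real_of_int j / A ..< a + (real_of_int j + 1) / A}"

definition Idx :: "real \<Rightarrow> real \<Rightarrow> real \<Rightarrow> int set" where
  "Idx a A N1 = {j. Ival a A j \<inter> {N1/4 .. 4*N1} \<noteq> {}}"

end

theory Submission
  imports Defs
begin

text \<open>Write \<open>y\<^sub>j\<close> for the left end of the \<open>j\<close>-th interval and \<open>t\<^sub>j = y\<^sub>j\<^sup>2 + k\<close>. For \<open>y \<in> I\<^sub>j\<close>
  the band condition pins \<open>x\<^sup>2\<close> to \<open>[t\<^sub>j, t\<^sub>j + 9 N\<^sub>1/A]\<close>, and since \<open>x \<ge> N\<^sub>1/4\<close> this pins \<open>x\<close> to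
  \<open>[\<surd>t\<^sub>j, \<surd>t\<^sub>j + 36/A]\<close>; so \<open>\<kappa>(j)\<close> is the index of the interval containing \<open>\<surd>t\<^sub>j\<close>.
  As \<open>k \<le> 3 y\<^sub>j\<^sup>2\<close>, the map \<open>y \<mapsto> \<surd>(y\<^sup>2 + k)\<close> has slope at least \<open>1/2\<close> there, so indices
  two apart have distinct \<open>\<kappa>\<close>. Indices \<open>j\<close> for which no such \<open>x\<close> exists get an injective
  value far below all others.\<close>

lemma sqrt_square_add_diff_ge:
  fixes y y' k :: real
  assumes "0 < y" "y \<le> y'" "0 < y\<^sup>2 + k" "y\<^sup>2 + k \<le> 4 * y\<^sup>2" "y'\<^sup>2 + k \<le> 4 * y'\<^sup>2"
  shows "(y' - y) / 2 \<le> sqrt (y'\<^sup>2 + k) - sqrt (y\<^sup>2 + k)"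
proof -
  define s s' where "s = sqrt (y\<^sup>2 + k)" and "s' = sqrt (y'\<^sup>2 + k)"
  have "y\<^sup>2 \<le> y'\<^sup>2" using assms by (intro power_mono) auto
  moreover from this have "0 \<le> y'\<^sup>2 + k" using assms by linarith
  ultimately have "s \<le> s'" "0 < s" and sq: "s\<^sup>2 = y\<^sup>2 + k" "s'\<^sup>2 = y'\<^sup>2 + k"
    using assms by (auto simp: s_def s'_def)
  have "(2 * y)\<^sup>2 = 4 * y\<^sup>2" "(2 * y')\<^sup>2 = 4 * y'\<^sup>2" by (simp_all add: power_mult_distrib)
  then have "s \<le> 2 * y" "s' \<le> 2 * y'"
    using assms by (auto simp: s_def s'_def intro!: real_le_lsqrt)
  have "(y' - y) * (y' + y) = (s' - s) * (s' + s)"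
    using sq by (simp add: algebra_simps power2_eq_square)
  also have "\<dots> \<le> (s' - s) * (2 * (y + y'))"
    using \<open>s \<le> s'\<close> \<open>s \<le> 2 * y\<close> \<open>s' \<le> 2 * y'\<close> by (intro mult_left_mono) auto
  finally have "(y' - y) * (y + y') \<le> (2 * (s' - s)) * (y + y')"
    by (simp add: algebra_simps)
  with assms(1,2) have "y' - y \<le> 2 * (s' - s)" by simp
  then show ?thesis by (simp add: s_def s'_def)
qed

lemma diff_sqrt_le_of_square_le:
  fixes x t D m :: real
  assumes "0 \<le> t" "t \<le> x\<^sup>2" "x\<^sup>2 \<le> t + D" "0 < m" "m \<le> x"
  shows "x - sqrt t \<le> D / m"
proof -
  have "sqrt t \<le> x" using assms by (intro real_le_lsqrt) auto
  moreover have "m \<le> x + sqrt t" using assms real_sqrt_ge_zero[of t] by linarith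
  ultimately have "(x - sqrt t) * m \<le> (x - sqrt t) * (x + sqrt t)"
    by (intro mult_left_mono) auto
  also have "\<dots> = x\<^sup>2 - t" using assms by (simp add: algebra_simps power2_eq_square)
  finally show ?thesis using assms by (simp add: pos_le_divide_eq)
qed

lemma card_le_3_if_gaps_le_1:
  fixes S :: "int set"
  assumes "\<And>i j. i \<in> S \<Longrightarrow> j \<in> S \<Longrightarrow> i \<le> j \<Longrightarrow> j \<le> i + 1"
  shows "card S \<le> 3"
proof (cases "S = {}")
  case False
  then obtain i where "i \<in> S" by blast
  have "S \<subseteq> {i - 1 .. i + 1}"
  proof
    fix j assume "j \<in> S"
    with \<open>i \<in> S\<close> assms[of i j] assms[of j i] show "j \<in> {i - 1 .. i + 1}" by force
  qed
  then have "card S \<le> card {i - 1 .. i + 1}" by (intro card_mono) auto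
  then show ?thesis by simp
qed simp

definition ival_index :: "real \<Rightarrow> real \<Rightarrow> real \<Rightarrow> int" where
  "ival_index a A x = \<lfloor>(x - a) * A\<rfloor>"

lemma mem_Ival_iff_ival_index:
  assumes "0 < A"
  shows "x \<in> Ival a A j \<longleftrightarrow> ival_index a A x = j"
  using assms by (simp add: Ival_def ival_index_def floor_eq_iff field_simps)

lemma ival_index_mono:
  assumes "0 < A" "x \<le> x'"
  shows "ival_index a A x \<le> ival_index a A x'"
  unfolding ival_index_def using assms by (intro floor_mono mult_right_mono) auto

lemma ival_index_add:
  assumes "0 < A"
  shows "ival_index a A (x + of_int n / A) = ival_index a A x + n"
proof -
  have "(x + of_int n / A - a) * A = (x - a) * A + of_int n"
    using assms by (simp add: field_simps)
  then show ?thesis by (simp add: ival_index_def)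
qed

locale hyperbolic_band =
  fixes N1 A k a :: real
  assumes A_ge_1: "1 \<le> A" and A_le: "A \<le> N1 / 1000" and k_le: "k \<le> N1\<^sup>2 / 1000"
    and offset_le: "a \<le> N1 / 4" and offset_gt: "N1 / 4 < a + 1 / A"
begin

definition left_end :: "int \<Rightarrow> real" where
  "left_end j = a + of_int j / A"

definition target :: "int \<Rightarrow> real" where
  "target j = (left_end j)\<^sup>2 + k"

text \<open>When \<open>target j\<close> is small, no admissible \<open>x\<close> exists; the shift by \<open>-(5 N\<^sub>1 A + 10)\<close>
  keeps these values below every value of the first branch.\<close>
definition kappa :: "int \<Rightarrow> int" where
  "kappa j = (if N1\<^sup>2 / 32 \<le> target j then ival_index a A (sqrt (target j))
              else j - (\<lceil>5 * N1 * A\<rceil> + 10))"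

lemma A_pos: "0 < A"
  using A_ge_1 by simp

lemma N1_ge: "1000 \<le> N1"
  using A_ge_1 A_le by simp

lemma mem_Ival_iff_left_end: "z \<in> Ival a A j \<longleftrightarrow> left_end j \<le> z \<and> z < left_end j + 1 / A"
  by (simp add: Ival_def left_end_def add_divide_distrib add.assoc)

lemma left_end_bounds:
  assumes "j \<in> Idx a A N1"
  shows "N1 / 5 \<le> left_end j" "left_end j \<le> 4 * N1" "of_int j \<le> 4 * N1 * A"
proof -
  from assms obtain z where "z \<in> Ival a A j" "N1 / 4 \<le> z" "z \<le> 4 * N1"
    unfolding Idx_def by auto
  then have "N1 / 4 - 1 / A < left_end j" and le: "left_end j \<le> 4 * N1"
    by (auto simp: mem_Ival_iff_left_end)
  moreover have "1 / A \<le> 1" using A_ge_1 by simp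
  ultimately show "N1 / 5 \<le> left_end j" "left_end j \<le> 4 * N1"
    using N1_ge by linarith+
  have "0 < a" using offset_gt \<open>1 / A \<le> 1\<close> N1_ge by linarith
  with le have "of_int j / A \<le> 4 * N1" by (simp add: left_end_def)
  then show "of_int j \<le> 4 * N1 * A" using A_pos by (simp add: divide_le_eq mult_ac)
qed

lemma k_le_3_left_end_square:
  assumes "j \<in> Idx a A N1"
  shows "k \<le> 3 * (left_end j)\<^sup>2"
proof -
  have "(N1 / 5)\<^sup>2 \<le> (left_end j)\<^sup>2"
    using left_end_bounds[OF assms] N1_ge by (intro power_mono) auto
  then have "N1\<^sup>2 \<le> 25 * (left_end j)\<^sup>2" by (simp add: power_divide)
  with k_le zero_le_power2[of "left_end j"] show ?thesis by linarith
qed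

lemma ival_index_sqrt_target_gt:
  assumes "0 \<le> target j"
  shows "- N1 * A / 4 - 1 < of_int (ival_index a A (sqrt (target j)))"
proof -
  have "-N1 * A / 4 \<le> (0 - a) * A" using offset_le A_pos by (simp add: mult_right_mono)
  also have "\<dots> \<le> (sqrt (target j) - a) * A"
    using assms A_pos by (intro mult_right_mono) auto
  finally show ?thesis unfolding ival_index_def by linarith
qed

lemma band_index_window:
  assumes j: "j \<in> Idx a A N1" and y: "y \<in> Ival a A j"
    and band: "k \<le> x\<^sup>2 - y\<^sup>2" "x\<^sup>2 - y\<^sup>2 \<le> k + N1 / A"
    and x: "N1 / 4 \<le> x" and "y \<le> 4 * N1"
  shows "N1\<^sup>2 / 32 \<le> target j"
    and "ival_index a A (sqrt (target j)) \<le> ival_index a A x"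
    and "ival_index a A x \<le> ival_index a A (sqrt (target j)) + 36"
proof -
  have yj: "left_end j \<le> y" "y < left_end j + 1 / A" and "0 < left_end j"
    using y left_end_bounds[OF j] N1_ge by (auto simp: mem_Ival_iff_left_end)
  have "(y - left_end j) * (y + left_end j) \<le> (1 / A) * (8 * N1)"
    using yj \<open>0 < left_end j\<close> \<open>y \<le> 4 * N1\<close> A_pos by (intro mult_mono) auto
  then have "y\<^sup>2 - (left_end j)\<^sup>2 \<le> 8 * N1 / A" by (simp add: algebra_simps power2_eq_square)
  moreover have "(left_end j)\<^sup>2 \<le> y\<^sup>2" using yj \<open>0 < left_end j\<close> by (intro power_mono) auto
  moreover have "8 * N1 / A + N1 / A = 9 * N1 / A" by (simp add: add_divide_distrib[symmetric])
  ultimately have t_le: "target j \<le> x\<^sup>2" and le_t: "x\<^sup>2 \<le> target j + 9 * N1 / A"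
    using band by (simp_all add: target_def)
  have "(N1 / 4)\<^sup>2 \<le> x\<^sup>2" using x N1_ge by (intro power_mono) auto
  moreover have "9 * N1 / A \<le> 9 * N1" using A_ge_1 N1_ge by (simp add: divide_le_eq)
  moreover have "9 * N1 \<le> N1\<^sup>2 / 32" using N1_ge by (simp add: power2_eq_square)
  ultimately show t_ge: "N1\<^sup>2 / 32 \<le> target j" using le_t by (simp add: power_divide)
  then have "0 \<le> target j" using zero_le_power2[of N1] by linarith
  then have "sqrt (target j) \<le> x" using t_le x N1_ge by (intro real_le_lsqrt) auto
  then show "ival_index a A (sqrt (target j)) \<le> ival_index a A x"
    by (rule ival_index_mono[OF A_pos])
  have "x - sqrt (target j) \<le> 9 * N1 / A / (N1 / 4)"
    using \<open>0 \<le> target j\<close> t_le le_t x N1_ge by (intro diff_sqrt_le_of_square_le) auto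
  also have "\<dots> = of_int 36 / A" using N1_ge by (simp add: field_simps)
  finally have "ival_index a A x \<le> ival_index a A (sqrt (target j) + of_int 36 / A)"
    using A_pos by (intro ival_index_mono) auto
  then show "ival_index a A x \<le> ival_index a A (sqrt (target j)) + 36"
    using A_pos by (simp only: ival_index_add)
qed

lemma kappa_covers:
  assumes "j \<in> Idx a A N1" "y \<in> Ival a A j"
    and "k \<le> x\<^sup>2 - y\<^sup>2" "x\<^sup>2 - y\<^sup>2 \<le> k + N1 / A" "N1 / 4 \<le> x" "y \<le> 4 * N1"
  shows "x \<in> (\<Union>i\<in>{kappa j - 100 .. kappa j + 100}. Ival a A i)"
proof -
  note window = band_index_window[OF assms]
  then have "ival_index a A x \<in> {kappa j - 100 .. kappa j + 100}"
    by (simp add: kappa_def)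
  moreover have "x \<in> Ival a A (ival_index a A x)"
    using A_pos by (simp add: mem_Ival_iff_ival_index)
  ultimately show ?thesis by blast
qed

lemma ival_index_target_strict_mono:
  assumes j: "j \<in> Idx a A N1" and j': "j' \<in> Idx a A N1" and "j + 2 \<le> j'"
    and t: "N1\<^sup>2 / 32 \<le> target j"
  shows "ival_index a A (sqrt (target j)) < ival_index a A (sqrt (target j'))"
proof -
  have "(of_int j + 2) / A \<le> of_int j' / A"
    using \<open>j + 2 \<le> j'\<close> A_pos by (intro divide_right_mono) auto
  then have gap: "left_end j + 2 / A \<le> left_end j'" by (simp add: left_end_def add_divide_distrib)
  have "0 < N1\<^sup>2 / 32" using N1_ge by simp
  have "(left_end j' - left_end j) / 2 \<le> sqrt (target j') - sqrt (target j)"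
    unfolding target_def
  proof (rule sqrt_square_add_diff_ge)
    show "0 < left_end j" using left_end_bounds(1)[OF j] N1_ge by linarith
    show "left_end j \<le> left_end j'" using gap A_pos by (smt (verit) divide_pos_pos)
    show "0 < (left_end j)\<^sup>2 + k" using t \<open>0 < N1\<^sup>2 / 32\<close> unfolding target_def by linarith
  qed (use k_le_3_left_end_square[OF j] k_le_3_left_end_square[OF j'] in auto)
  with gap have "sqrt (target j) + of_int 1 / A \<le> sqrt (target j')" by simp
  then have "ival_index a A (sqrt (target j) + of_int 1 / A) \<le> ival_index a A (sqrt (target j'))"
    by (rule ival_index_mono[OF A_pos])
  then show ?thesis using ival_index_add[OF A_pos, of a "sqrt (target j)" 1] by simp
qed

lemma kappa_eq_imp_close:
  assumes j: "j \<in> Idx a A N1" and j': "j' \<in> Idx a A N1"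
    and eq: "kappa j = kappa j'" and "j \<le> j'"
  shows "j' \<le> j + 1"
proof (rule ccontr)
  assume "\<not> j' \<le> j + 1"
  then have "j + 2 \<le> j'" by simp
  define L where "L = \<lceil>5 * N1 * A\<rceil> + 10"
  have L: "5 * N1 * A + 10 \<le> of_int L" "0 \<le> N1 * A"
    using N1_ge A_pos by (auto simp: L_def)
  have pos: "0 \<le> N1\<^sup>2 / 32" by simp
  consider (both) "N1\<^sup>2 / 32 \<le> target j" "N1\<^sup>2 / 32 \<le> target j'"
    | (first) "N1\<^sup>2 / 32 \<le> target j" "\<not> N1\<^sup>2 / 32 \<le> target j'"
    | (second) "\<not> N1\<^sup>2 / 32 \<le> target j" "N1\<^sup>2 / 32 \<le> target j'"
    | (neither) "\<not> N1\<^sup>2 / 32 \<le> target j" "\<not> N1\<^sup>2 / 32 \<le> target j'"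
    by blast
  then show False
  proof cases
    case both
    with eq ival_index_target_strict_mono[OF j j' \<open>j + 2 \<le> j'\<close>] show False
      by (simp add: kappa_def)
  next
    case first
    with eq have "of_int (ival_index a A (sqrt (target j))) = of_int j' - (of_int L :: real)"
      by (simp add: kappa_def L_def)
    with ival_index_sqrt_target_gt[of j] first pos left_end_bounds(3)[OF j'] L show False
      by linarith
  next
    case second
    with eq have "of_int (ival_index a A (sqrt (target j'))) = of_int j - (of_int L :: real)"
      by (simp add: kappa_def L_def)
    with ival_index_sqrt_target_gt[of j'] second pos left_end_bounds(3)[OF j] L show False
      by linarith
  next
    case neither
    with eq \<open>j + 2 \<le> j'\<close> show False by (simp add: kappa_def)
  qed
qed

lemma card_kappa_fiber_le: "card {j \<in> Idx a A N1. kappa j = v} \<le> 3"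
  by (rule card_le_3_if_gaps_le_1) (auto intro: kappa_eq_imp_close)

end

theorem lemmaA1:
  shows "\<exists>C>0. \<exists>c>0. \<forall>(N1::real) (A::real) (k::real).
     1 \<le> C * N1 \<and> 1 \<le> C * A \<and> A \<le> c * N1 \<and> k \<le> c * N1^2 \<longrightarrow>
     (\<forall>a::real. a \<le> N1/4 \<and> N1/4 < a + 1/A \<longrightarrow>
        (\<exists>\<kappa>::int \<Rightarrow> int.
           (\<forall>j x y. j \<in> Idx a A N1 \<and> x \<ge> 0 \<and> y \<ge> 0 \<and>
                k \<le> x^2 - y^2 \<and> x^2 - y^2 \<le> k + N1 / A \<and>
                N1/4 \<le> x \<and> x \<le> 4*N1 \<and> N1/4 \<le> y \<and> y \<le> 4*N1 \<and>
                y \<in> Ival a A j \<longrightarrow>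
                x \<in> (\<Union>i\<in>{\<kappa> j - 100 .. \<kappa> j + 100}. Ival a A i)) \<and>
           (\<forall>v. card {j \<in> Idx a A N1. \<kappa> j = v} \<le> 100)))"
proof (rule exI[of _ 1], rule conjI, simp, rule exI[of _ "1/1000"], rule conjI, simp,
    intro allI impI, elim conjE)
  fix N1 A k a :: real
  assume "1 \<le> 1 * N1" "1 \<le> 1 * A" "A \<le> 1 / 1000 * N1" "k \<le> 1 / 1000 * N1\<^sup>2"
    "a \<le> N1 / 4" "N1 / 4 < a + 1 / A"
  then interpret hyperbolic_band N1 A k a
    by unfold_locales simp_all
  show "\<exists>\<kappa>. (\<forall>j x y. j \<in> Idx a A N1 \<and> x \<ge> 0 \<and> y \<ge> 0 \<and>
                k \<le> x^2 - y^2 \<and> x^2 - y^2 \<le> k + N1 / A \<and>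
                N1/4 \<le> x \<and> x \<le> 4*N1 \<and> N1/4 \<le> y \<and> y \<le> 4*N1 \<and>
                y \<in> Ival a A j \<longrightarrow>
                x \<in> (\<Union>i\<in>{\<kappa> j - 100 .. \<kappa> j + 100}. Ival a A i)) \<and>
           (\<forall>v. card {j \<in> Idx a A N1. \<kappa> j = v} \<le> 100)"
  proof (intro exI[of _ kappa] conjI allI impI)
    show "card {j \<in> Idx a A N1. kappa j = v} \<le> 100" for v
      using card_kappa_fiber_le[of v] by linarith
  qed (use kappa_covers in auto)
qed

end
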